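(* Let $\sigma$ be a term ordering on $\mathbb{T}^n$, let $I$ be a non-zero ideal in $\mathbb{Q}[x_1,\dots,x_n]$, and let $G_\sigma$ be its reduced $\sigma$-Gröbner basis. Let $J=\langle\operatorname{prim}(G_\sigma)\rangle\subseteq\mathbb{Z}[x_1,\dots,x_n]$. Then $\operatorname{rad}(\operatorname{den}(G_\sigma))=\operatorname{rad}(\operatorname{lcm}_\sigma(J))$.
   Context: $\mathbb{T}^n$ is the monoid of power-products in $x_1,\dots,x_n$; $\mathrm{LT}_\sigma$, $\mathrm{LC}_\sigma$, $\mathrm{LM}_\sigma$ denote leading term, leading coefficient and leading monomial. For $f\in\mathbb{Q}[x_1,\dots,x_n]$, $\operatorname{den}(f)$ is the positive lcm of the denominators of its coefficients; $\operatorname{den}(F)$ is the lcm of $\operatorname{den}(f)$, $f\in F$. For non-zero $f$, with $c$ the integer content of $f\cdot\operatorname{den}(f)$, $\operatorname{prim}(f)=c^{-1}f\cdot\operatorname{den}(f)$, and $\operatorname{prim}(F)=\{\operatorname{prim}(f):f\in F\}$. For a positive integer $N$, $\operatorname{rad}(N)$ is the product of the distinct primes dividing $N$. Non-zero $g_1,\dots,g_s\in\mathbb{Z}[x_1,\dots,x_n]$ form a strong $\sigma$-Gröbner basis of $\langle g_1,\dots,g_s\rangle$ if for every non-zero $f$ in this ideal some $\mathrm{LM}_\sigma(g_i)$ divides $\mathrm{LM}_\sigma(f)$; it is minimal if moreover $\mathrm{LM}_\sigma(g_i)\nmid\mathrm{LM}_\sigma(g_j)$ for $i\ne j$. Every non-zero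 ideal of $\mathbb{Z}[x_1,\dots,x_n]$ has a minimal strong $\sigma$-Gröbner basis, and all of them have the same set of leading coefficients. For an ideal $J$ of $\mathbb{Z}[x_1,\dots,x_n]$, $\operatorname{lcm}_\sigma(J)$ is the least common multiple of the leading coefficients of the elements of a minimal strong $\sigma$-Gröbner basis of $J$. *)

theory Defs
  imports Complex_Main "HOL-Library.Poly_Mapping" "HOL-Computational_Algebra.Primes"
begin

(* Multivariate polynomials in x_0,...,x_{n-1} (the paper's x_1,...,x_n) with
coefficients in 'a are represented as finitely supported maps from power-products
(finitely supported exponent vectors nat \<Rightarrow>_0 nat) to coefficients, restricted to
power-products involving only the first n variables. *)

type_synonym pp = "nat \<Rightarrow>\<^sub>0 nat"
type_synonym 'a mpoly = "pp \<Rightarrow>\<^sub>0 'a"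

definition PP :: "nat \<Rightarrow> pp set"
  where "PP n = {t. Poly_Mapping.keys t \<subseteq> {..<n}}"

definition is_poly :: "nat \<Rightarrow> 'a::zero mpoly \<Rightarrow> bool"
  where "is_poly n f \<longleftrightarrow> Poly_Mapping.keys f \<subseteq> PP n"

definition pp_dvd :: "pp \<Rightarrow> pp \<Rightarrow> bool"
  where "pp_dvd s t \<longleftrightarrow> (\<exists>u. t = s + u)"

definition term_order :: "nat \<Rightarrow> (pp \<Rightarrow> pp \<Rightarrow> bool) \<Rightarrow> bool" where
  "term_order n le \<longleftrightarrow>
     (\<forall>t\<in>PP n. le t t) \<and>
     (\<forall>s\<in>PP n. \<forall>t\<in>PP n. le s t \<and> le t s \<longrightarrow> s = t) \<and>
     (\<forall>r\<in>PP n. \<forall>s\<in>PP n. \<forall>t\<in>PP n. le r s \<and> le s t \<longrightarrow> le r t) \<and>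
     (\<forall>s\<in>PP n. \<forall>t\<in>PP n. le s t \<or> le t s) \<and>
     (\<forall>s\<in>PP n. \<forall>t\<in>PP n. \<forall>u\<in>PP n. le s t \<longrightarrow> le (s + u) (t + u)) \<and>
     (\<forall>t\<in>PP n. le 0 t)"

definition LT :: "(pp \<Rightarrow> pp \<Rightarrow> bool) \<Rightarrow> 'a::zero mpoly \<Rightarrow> pp" where
  "LT le f = (THE t. t \<in> Poly_Mapping.keys f \<and> (\<forall>s\<in>Poly_Mapping.keys f. le s t))"

definition LC :: "(pp \<Rightarrow> pp \<Rightarrow> bool) \<Rightarrow> 'a::zero mpoly \<Rightarrow> 'a" where
  "LC le f = Poly_Mapping.lookup f (LT le f)"

definition LM_dvd :: "(pp \<Rightarrow> pp \<Rightarrow> bool) \<Rightarrow> 'a::{zero,comm_monoid_mult} mpoly \<Rightarrow> 'a mpoly \<Rightarrow> bool" where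
  "LM_dvd le g f \<longleftrightarrow> LC le g dvd LC le f \<and> pp_dvd (LT le g) (LT le f)"

definition is_ideal :: "nat \<Rightarrow> 'a::comm_ring_1 mpoly set \<Rightarrow> bool" where
  "is_ideal n I \<longleftrightarrow> (\<forall>f\<in>I. is_poly n f) \<and> 0 \<in> I \<and>
     (\<forall>f\<in>I. \<forall>g\<in>I. f + g \<in> I) \<and>
     (\<forall>f\<in>I. \<forall>h. is_poly n h \<longrightarrow> h * f \<in> I)"

definition ideal_gen :: "nat \<Rightarrow> 'a::comm_ring_1 mpoly set \<Rightarrow> 'a mpoly set" where
  "ideal_gen n F = {(\<Sum>g\<in>F. c g * g) | c. \<forall>g\<in>F. is_poly n (c g)}"

definition reduced_GB :: "nat \<Rightarrow> (pp \<Rightarrow> pp \<Rightarrow> bool) \<Rightarrow> 'a::field mpoly set \<Rightarrow> 'a mpoly set \<Rightarrow> bool" where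
  "reduced_GB n le I G \<longleftrightarrow>
     finite G \<and> G \<subseteq> I \<and> 0 \<notin> G \<and>
     (\<forall>f\<in>I. f \<noteq> 0 \<longrightarrow> (\<exists>g\<in>G. pp_dvd (LT le g) (LT le f))) \<and>
     (\<forall>g\<in>G. LC le g = 1) \<and>
     (\<forall>g\<in>G. \<forall>g'\<in>G. g \<noteq> g' \<longrightarrow> (\<forall>t\<in>Poly_Mapping.keys g. \<not> pp_dvd (LT le g') t))"

definition strong_GB :: "nat \<Rightarrow> (pp \<Rightarrow> pp \<Rightarrow> bool) \<Rightarrow> int mpoly set \<Rightarrow> int mpoly set \<Rightarrow> bool" where
  "strong_GB n le J B \<longleftrightarrow>
     finite B \<and> 0 \<notin> B \<and> (\<forall>g\<in>B. is_poly n g) \<and> ideal_gen n B = J \<and>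
     (\<forall>f\<in>J. f \<noteq> 0 \<longrightarrow> (\<exists>g\<in>B. LM_dvd le g f))"

definition minimal_strong_GB :: "nat \<Rightarrow> (pp \<Rightarrow> pp \<Rightarrow> bool) \<Rightarrow> int mpoly set \<Rightarrow> int mpoly set \<Rightarrow> bool" where
  "minimal_strong_GB n le J B \<longleftrightarrow> strong_GB n le J B \<and>
     (\<forall>g\<in>B. \<forall>g'\<in>B. g \<noteq> g' \<longrightarrow> \<not> LM_dvd le g g')"

(* lcm_sigma(J): lcm of the leading coefficients of a minimal strong GB of J
(well defined since all such bases have the same leading coefficients). *)
definition lcm_sigma :: "nat \<Rightarrow> (pp \<Rightarrow> pp \<Rightarrow> bool) \<Rightarrow> int mpoly set \<Rightarrow> nat" where
  "lcm_sigma n le J = (THE m. \<exists>B. minimal_strong_GB n le J B \<and> m = nat (Lcm (LC le ` B)))"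

definition den :: "rat mpoly \<Rightarrow> nat" where
  "den f = Lcm ((\<lambda>t. nat (snd (quotient_of (Poly_Mapping.lookup f t)))) ` Poly_Mapping.keys f)"

definition den_set :: "rat mpoly set \<Rightarrow> nat" where
  "den_set F = Lcm (den ` F)"

definition rat_to_int :: "rat \<Rightarrow> int" where
  "rat_to_int q = fst (quotient_of q)"

definition prim :: "rat mpoly \<Rightarrow> int mpoly" where
  "prim f = (let g = Poly_Mapping.map (\<lambda>q. rat_to_int (q * of_nat (den f))) f;
                 c = Gcd (Poly_Mapping.lookup g ` Poly_Mapping.keys g)
             in Poly_Mapping.map (\<lambda>a. a div c) g)"

definition rad :: "nat \<Rightarrow> nat" where
  "rad N = (\<Prod>p\<in>prime_factors N. p)"

end

theory Submission
  imports Defs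
begin

text \<open>
  A prime \<open>p\<close> divides some \<open>den g\<close>, \<open>g \<in> G\<close>, exactly when it divides the leading
  coefficient of some element of a minimal strong Groebner basis \<open>B\<close> of \<open>J\<close>.

  If \<open>p\<close> divides \<open>LC b\<close>, \<open>b \<in> B\<close>: the rational image of \<open>J\<close> lies in \<open>I\<close>, so some
  \<open>LT g\<close> divides \<open>LT b\<close>, and a Bezout combination of \<open>b\<close> and a monomial multiple of
  \<open>prim g\<close> (whose leading coefficient is \<open>den g\<close>) is an element of \<open>J\<close> with leading
  monomial \<open>gcd (LC b) (den g) \<cdot> LT b\<close>. Minimality of \<open>B\<close> forces \<open>LC b\<close> to divide \<open>den g\<close>.

  Conversely, let \<open>p\<close> divide \<open>den g\<close> but no leading coefficient of \<open>B\<close>, and let \<open>t\<close> be the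
  largest term of \<open>prim g\<close> whose coefficient is prime to \<open>p\<close>; it is not \<open>LT g\<close>.
  Cancelling leading terms of \<open>prim g\<close> against \<open>B\<close> with multipliers prime to \<open>p\<close> never
  changes the leading term modulo \<open>p\<close>, so the descent stops at an element of \<open>J\<close> with
  leading term \<open>t\<close>. Some \<open>LT g'\<close>, \<open>g' \<in> G\<close>, divides \<open>t\<close>, contradicting reducedness of \<open>G\<close>.

  Since \<open>lcm_sigma\<close> is a definite description, we also show that minimal strong Groebner bases
  exist (by Dickson's lemma) and that all of them have the same lcm of leading coefficients.
\<close>

section \<open>Power products and Dickson's lemma\<close>

lemma pp_dvd_iff_lookup_le:
  "pp_dvd s t \<longleftrightarrow> (\<forall>i. Poly_Mapping.lookup s i \<le> Poly_Mapping.lookup t i)"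
proof
  assume "pp_dvd s t"
  then show "\<forall>i. Poly_Mapping.lookup s i \<le> Poly_Mapping.lookup t i"
    by (auto simp: pp_dvd_def lookup_add)
next
  assume le: "\<forall>i. Poly_Mapping.lookup s i \<le> Poly_Mapping.lookup t i"
  have "t = s + (t - s)"
    by (rule poly_mapping_eqI) (use le in \<open>simp add: lookup_add lookup_minus\<close>)
  then show "pp_dvd s t"
    by (auto simp: pp_dvd_def)
qed

lemma pp_dvd_refl: "pp_dvd s s"
  by (simp add: pp_dvd_iff_lookup_le)

lemma pp_dvd_trans: "pp_dvd r s \<Longrightarrow> pp_dvd s t \<Longrightarrow> pp_dvd r t"
  by (auto simp: pp_dvd_iff_lookup_le intro: order_trans)

lemma PP_zero: "0 \<in> PP n"
  by (simp add: PP_def)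

lemma PP_add: "s \<in> PP n \<Longrightarrow> t \<in> PP n \<Longrightarrow> s + t \<in> PP n"
  unfolding PP_def using keys_add[of s t] by auto

lemma PP_0: "PP 0 = {0}"
  by (auto simp: PP_def)

lemma PP_pp_dvd:
  assumes "pp_dvd s t" "t \<in> PP n"
  shows "s \<in> PP n"
proof -
  have "x \<in> Poly_Mapping.keys t" if "x \<in> Poly_Mapping.keys s" for x
    using assms(1) that unfolding pp_dvd_iff_lookup_le in_keys_iff by (metis le_zero_eq)
  with assms(2) show ?thesis
    by (auto simp: PP_def)
qed
lemma pp_dvd_PPE:
  assumes "pp_dvd s t" "t \<in> PP n"
  obtains u where "u \<in> PP n" "t = s + u"
proof -
  obtain u where u: "t = s + u"
    using assms(1) by (auto simp: pp_dvd_def)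
  then have "pp_dvd u t"
    by (simp add: pp_dvd_def add.commute)
  with u assms(2) show thesis
    using PP_pp_dvd that by blast
qed

lemma pp_dvd_iff_update:
  "pp_dvd s t \<longleftrightarrow>
     pp_dvd (Poly_Mapping.update k 0 s) (Poly_Mapping.update k 0 t) \<and>
     Poly_Mapping.lookup s k \<le> Poly_Mapping.lookup t k"
proof -
  have "Poly_Mapping.lookup s i \<le> Poly_Mapping.lookup t i"
    if "\<forall>i. k \<noteq> i \<longrightarrow> Poly_Mapping.lookup s i \<le> Poly_Mapping.lookup t i"
      "Poly_Mapping.lookup s k \<le> Poly_Mapping.lookup t k" for i
    using that by (cases "i = k") auto
  then show ?thesis
    unfolding pp_dvd_iff_lookup_le lookup_update by auto
qed
lemma update_last_PP: "s \<in> PP (Suc n) \<Longrightarrow> Poly_Mapping.update n 0 s \<in> PP n"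
  unfolding PP_def by (auto simp: keys_update)

lemma dickson_projection:
  assumes IH: "\<And>S. S \<subseteq> PP n \<Longrightarrow> \<exists>F. finite F \<and> F \<subseteq> S \<and> (\<forall>s\<in>S. \<exists>f\<in>F. pp_dvd f s)"
    and "T \<subseteq> PP (Suc n)"
  shows "\<exists>G. finite G \<and> G \<subseteq> T \<and>
    (\<forall>s\<in>T. \<exists>g\<in>G. pp_dvd (Poly_Mapping.update n 0 g) (Poly_Mapping.update n 0 s))"
proof -
  let ?\<pi> = "Poly_Mapping.update n 0"
  have "?\<pi> ` T \<subseteq> PP n"
    using assms(2) update_last_PP by blast
  obtain F where F: "finite F" "F \<subseteq> ?\<pi> ` T" "\<forall>s\<in>?\<pi> ` T. \<exists>f\<in>F. pp_dvd f s"
    using IH[OF \<open>?\<pi> ` T \<subseteq> PP n\<close>] by (elim exE conjE) (rule that)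
  obtain G where "G \<subseteq> T" "finite G" "F = ?\<pi> ` G"
    using finite_subset_image[OF F(1,2)] by (elim exE conjE) (rule that)
  with F show ?thesis
    by auto
qed

text \<open>A basis of the projection to the first \<open>n\<close> variables handles all elements whose last
  exponent is large; each of the finitely many remaining last exponents needs its own one.\<close>

lemma dickson_Suc:
  assumes IH: "\<And>S. S \<subseteq> PP n \<Longrightarrow> \<exists>F. finite F \<and> F \<subseteq> S \<and> (\<forall>s\<in>S. \<exists>f\<in>F. pp_dvd f s)"
    and S: "S \<subseteq> PP (Suc n)"
  shows "\<exists>F. finite F \<and> F \<subseteq> S \<and> (\<forall>s\<in>S. \<exists>f\<in>F. pp_dvd f s)"
proof -
  let ?\<pi> = "Poly_Mapping.update n 0"
  obtain G0 where G0: "finite G0" "G0 \<subseteq> S" "\<forall>s\<in>S. \<exists>g\<in>G0. pp_dvd (?\<pi> g) (?\<pi> s)"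
    using dickson_projection[OF IH S] by blast
  define m where "m = Max (insert 0 ((\<lambda>g. Poly_Mapping.lookup g n) ` G0))"
  have m: "Poly_Mapping.lookup g n \<le> m" if "g \<in> G0" for g
    unfolding m_def using G0(1) that by auto
  define slice where "slice k = {s\<in>S. Poly_Mapping.lookup s n = k}" for k
  have "\<forall>k. \<exists>G. finite G \<and> G \<subseteq> slice k \<and> (\<forall>s\<in>slice k. \<exists>g\<in>G. pp_dvd (?\<pi> g) (?\<pi> s))"
  proof
    fix k
    have "slice k \<subseteq> PP (Suc n)"
      using S unfolding slice_def by auto
    then show "\<exists>G. finite G \<and> G \<subseteq> slice k \<and> (\<forall>s\<in>slice k. \<exists>g\<in>G. pp_dvd (?\<pi> g) (?\<pi> s))"
      using dickson_projection[OF IH] by blast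
  qed
  then obtain G where G: "\<And>k. finite (G k)" "\<And>k. G k \<subseteq> slice k"
    "\<And>k. \<forall>s\<in>slice k. \<exists>g\<in>G k. pp_dvd (?\<pi> g) (?\<pi> s)"
    by metis
  define F where "F = G0 \<union> (\<Union>k<m. G k)"
  have "\<exists>f\<in>F. pp_dvd f s" if s: "s \<in> S" for s
  proof (cases "m \<le> Poly_Mapping.lookup s n")
    case True
    obtain g where "g \<in> G0" "pp_dvd (?\<pi> g) (?\<pi> s)"
      using G0(3) s by blast
    moreover from this have "Poly_Mapping.lookup g n \<le> Poly_Mapping.lookup s n"
      using m True by fastforce
    ultimately show ?thesis
      unfolding F_def using pp_dvd_iff_update by blast
  next
    case False
    obtain g where g: "g \<in> G (Poly_Mapping.lookup s n)" "pp_dvd (?\<pi> g) (?\<pi> s)"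
      using G(3) s unfolding slice_def by blast
    then have "Poly_Mapping.lookup g n = Poly_Mapping.lookup s n"
      using G(2) unfolding slice_def by blast
    with g False show ?thesis
      unfolding F_def using pp_dvd_iff_update by fastforce
  qed
  moreover have "finite F" "F \<subseteq> S"
    unfolding F_def using G0 G(1,2) unfolding slice_def by blast+
  ultimately show ?thesis
    by blast
qed

lemma dickson:
  "S \<subseteq> PP n \<Longrightarrow> \<exists>F. finite F \<and> F \<subseteq> S \<and> (\<forall>s\<in>S. \<exists>f\<in>F. pp_dvd f s)"
proof (induction n arbitrary: S)
  case 0
  then show ?case
    using PP_0 pp_dvd_refl by (intro exI[of _ S]) (auto intro: finite_subset)
next
  case (Suc n)
  then show ?case
    by (rule dickson_Suc)
qed

lemma dickson_good_sequence:
  fixes f :: "nat \<Rightarrow> pp"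
  assumes "\<And>i. f i \<in> PP n"
  shows "\<exists>i j. i < j \<and> pp_dvd (f i) (f j)"
proof -
  obtain F where F: "finite F" "F \<subseteq> range f" "\<forall>s\<in>range f. \<exists>g\<in>F. pp_dvd g s"
    using dickson[of "range f" n] assms by auto
  obtain C :: "nat set" where C: "finite C" "F = f ` C"
    using finite_subset_image[OF F(1,2)] by blast
  obtain i where "i \<in> C" "pp_dvd (f i) (f (Suc (Max (insert 0 C))))"
    using F(3) C(2) by blast
  moreover from this have "i < Suc (Max (insert 0 C))"
    using C(1) by (simp add: le_imp_less_Suc)
  ultimately show ?thesis
    by blast
qed

section \<open>Term orderings and leading terms\<close>

locale term_ordering =
  fixes n :: nat and le :: "pp \<Rightarrow> pp \<Rightarrow> bool"
  assumes term_order: "term_order n le"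
begin

lemma ord_refl: "t \<in> PP n \<Longrightarrow> le t t"
  using term_order unfolding term_order_def by blast

lemma ord_antisym: "s \<in> PP n \<Longrightarrow> t \<in> PP n \<Longrightarrow> le s t \<Longrightarrow> le t s \<Longrightarrow> s = t"
  using term_order unfolding term_order_def by blast

lemma ord_trans: "r \<in> PP n \<Longrightarrow> s \<in> PP n \<Longrightarrow> t \<in> PP n \<Longrightarrow> le r s \<Longrightarrow> le s t \<Longrightarrow> le r t"
  using term_order unfolding term_order_def by blast

lemma ord_total: "s \<in> PP n \<Longrightarrow> t \<in> PP n \<Longrightarrow> le s t \<or> le t s"
  using term_order unfolding term_order_def by blast

lemma ord_add_left_mono: "s \<in> PP n \<Longrightarrow> t \<in> PP n \<Longrightarrow> u \<in> PP n \<Longrightarrow> le s t \<Longrightarrow> le (u + s) (u + t)"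
  using term_order unfolding term_order_def by (metis add.commute)

lemma ord_zero_least: "t \<in> PP n \<Longrightarrow> le 0 t"
  using term_order unfolding term_order_def by blast

lemma ord_pp_dvd:
  assumes "pp_dvd s t" "t \<in> PP n"
  shows "le s t"
proof -
  obtain u where u: "u \<in> PP n" "t = s + u"
    using assms by (rule pp_dvd_PPE)
  moreover have "s \<in> PP n"
    using assms by (rule PP_pp_dvd)
  ultimately show ?thesis
    using ord_add_left_mono[OF PP_zero u(1) \<open>s \<in> PP n\<close> ord_zero_least[OF u(1)]] by simp
qed

lemma ord_maximum_exists:
  "finite A \<Longrightarrow> A \<noteq> {} \<Longrightarrow> A \<subseteq> PP n \<Longrightarrow> \<exists>t\<in>A. \<forall>s\<in>A. le s t"
proof (induction A rule: finite_ne_induct)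
  case (singleton x)
  then show ?case
    using ord_refl by auto
next
  case (insert x F)
  then obtain t where t: "t \<in> F" "\<forall>s\<in>F. le s t"
    by auto
  show ?case
  proof (cases "le x t")
    case True
    then show ?thesis
      using t insert.prems ord_refl by auto
  next
    case False
    then have "le t x"
      using ord_total insert.prems t by blast
    then have "\<forall>s\<in>F. le s x"
      using t insert.prems ord_trans by (meson insert_subset subsetD)
    then show ?thesis
      using insert.prems ord_refl by auto
  qed
qed

definition lt :: "pp \<Rightarrow> pp \<Rightarrow> bool"
  where "lt s t \<longleftrightarrow> le s t \<and> s \<noteq> t"

lemma wf_lt: "wf {(s, t). s \<in> PP n \<and> t \<in> PP n \<and> lt s t}"
proof (rule ccontr)
  assume "\<not> ?thesis"
  then obtain f where "\<And>i. (f (Suc i), f i) \<in> {(s, t). s \<in> PP n \<and> t \<in> PP n \<and> lt s t}"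
    unfolding wf_iff_no_infinite_down_chain by blast
  then have fP: "\<And>i. f i \<in> PP n" and step: "\<And>i. le (f (Suc i)) (f i)"
    and neq: "\<And>i. f (Suc i) \<noteq> f i"
    by (auto simp: lt_def)
  have descending: "le (f (i + k)) (f i)" for i k
  proof (induction k)
    case 0
    then show ?case
      using ord_refl fP by simp
  next
    case (Suc k)
    then show ?case
      using ord_trans[OF fP fP fP step[of "i + k"]] by simp
  qed
  obtain i j where ij: "i < j" "pp_dvd (f i) (f j)"
    using dickson_good_sequence[OF fP] by blast
  then have "le (f i) (f j)"
    using ord_pp_dvd fP by blast
  moreover have "le (f j) (f (Suc i))"
    using descending[of "Suc i" "j - Suc i"] ij by simp
  ultimately have "le (f i) (f (Suc i))"
    using ord_trans fP by blast
  then show False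
    using ord_antisym fP step neq by blast
qed

lemma lt_induct [consumes 1, case_names less]:
  assumes "t \<in> PP n"
    and "\<And>t. t \<in> PP n \<Longrightarrow> (\<And>s. s \<in> PP n \<Longrightarrow> lt s t \<Longrightarrow> P s) \<Longrightarrow> P t"
  shows "P t"
proof -
  have "t \<in> PP n \<longrightarrow> P t"
    by (rule wf_induct[OF wf_lt]) (use assms(2) in blast)
  then show ?thesis
    using assms(1) by blast
qed

lemma LT_eqI:
  "is_poly n f \<Longrightarrow> t \<in> Poly_Mapping.keys f \<Longrightarrow> \<forall>s\<in>Poly_Mapping.keys f. le s t \<Longrightarrow> LT le f = t"
  unfolding LT_def is_poly_def by (rule the_equality) (auto intro: ord_antisym)

lemma LT_in_keys_le:
  assumes "is_poly n f" "f \<noteq> 0"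
  shows "LT le f \<in> Poly_Mapping.keys f" "\<forall>s\<in>Poly_Mapping.keys f. le s (LT le f)"
proof -
  obtain t where "t \<in> Poly_Mapping.keys f" "\<forall>s\<in>Poly_Mapping.keys f. le s t"
    using ord_maximum_exists[of "Poly_Mapping.keys f"] assms by (auto simp: is_poly_def)
  with LT_eqI[OF assms(1)] show "LT le f \<in> Poly_Mapping.keys f" "\<forall>s\<in>Poly_Mapping.keys f. le s (LT le f)"
    by auto
qed

lemma LT_in_keys: "is_poly n f \<Longrightarrow> f \<noteq> 0 \<Longrightarrow> LT le f \<in> Poly_Mapping.keys f"
  using LT_in_keys_le(1) .

lemma le_LT: "is_poly n f \<Longrightarrow> s \<in> Poly_Mapping.keys f \<Longrightarrow> le s (LT le f)"
  using LT_in_keys_le(2) by fastforce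

lemma LT_in_PP: "is_poly n f \<Longrightarrow> f \<noteq> 0 \<Longrightarrow> LT le f \<in> PP n"
  using LT_in_keys by (auto simp: is_poly_def)

lemma LC_neq_zero: "is_poly n f \<Longrightarrow> f \<noteq> 0 \<Longrightarrow> LC le f \<noteq> 0"
  using LT_in_keys by (simp add: LC_def in_keys_iff)

lemma key_pp_dvd_LT_eq:
  assumes "is_poly n f" "t \<in> Poly_Mapping.keys f" "pp_dvd (LT le f) t"
  shows "t = LT le f"
proof -
  have "t \<in> PP n" "f \<noteq> 0"
    using assms(1,2) by (auto simp: is_poly_def)
  then show ?thesis
    using assms ord_antisym ord_pp_dvd le_LT LT_in_PP by blast
qed

end

section \<open>Polynomial arithmetic and ideals\<close>

lemma update_eq_add_single:
  fixes h :: "'a \<Rightarrow>\<^sub>0 'b::monoid_add"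
  shows "a \<notin> Poly_Mapping.keys h \<Longrightarrow> Poly_Mapping.update a c h = h + Poly_Mapping.single a c"
  by (rule poly_mapping_eqI) (auto simp: lookup_update lookup_add lookup_single in_keys_iff)

lemma lookup_monom_mult:
  fixes h :: "'a::comm_semiring_1 mpoly"
  shows "Poly_Mapping.lookup (Poly_Mapping.single u c * h) (u + s) = c * Poly_Mapping.lookup h s"
proof -
  have "Poly_Mapping.lookup (Poly_Mapping.single u c * h) (u + s) =
    (\<Sum>l. (c when u = l) * (\<Sum>q. Poly_Mapping.lookup h q when u + s = l + q))"
    by (simp only: lookup_mult lookup_single)
  also have "\<dots> = (\<Sum>l. (c * (\<Sum>q. Poly_Mapping.lookup h q when u + s = l + q)) when u = l)"
    by (simp only: when_mult)
  also have "\<dots> = c * (\<Sum>q. Poly_Mapping.lookup h q when u + s = u + q)"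
    by (rule Sum_any_when_equal')
  also have "(\<Sum>q. Poly_Mapping.lookup h q when u + s = u + q) = Poly_Mapping.lookup h s"
    by (simp only: add_left_cancel Sum_any_when_equal')
  finally show ?thesis .
qed

lemma keys_monom_mult_subset:
  fixes h :: "'a::comm_semiring_1 mpoly"
  shows "Poly_Mapping.keys (Poly_Mapping.single u c * h) \<subseteq> (+) u ` Poly_Mapping.keys h"
  using keys_mult[of "Poly_Mapping.single u c" h] by (auto split: if_splits)

lemma keys_monom_mult:
  fixes h :: "'a::idom mpoly"
  assumes "c \<noteq> 0"
  shows "Poly_Mapping.keys (Poly_Mapping.single u c * h) = (+) u ` Poly_Mapping.keys h"
proof
  show "(+) u ` Poly_Mapping.keys h \<subseteq> Poly_Mapping.keys (Poly_Mapping.single u c * h)"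
    using assms by (auto simp: in_keys_iff lookup_monom_mult)
qed (rule keys_monom_mult_subset)

lemma lookup_monom_mult_if:
  fixes h :: "'a::comm_semiring_1 mpoly"
  shows "Poly_Mapping.lookup (Poly_Mapping.single u c * h) k =
    (if pp_dvd u k then c * Poly_Mapping.lookup h (k - u) else 0)"
proof (cases "pp_dvd u k")
  case True
  then obtain s where "k = u + s"
    by (auto simp: pp_dvd_def)
  with True show ?thesis
    by (simp add: lookup_monom_mult)
next
  case False
  then have "k \<notin> Poly_Mapping.keys (Poly_Mapping.single u c * h)"
    using keys_monom_mult_subset[of u c h] by (auto simp: pp_dvd_def)
  then show ?thesis
    using False by (simp add: in_keys_iff)
qed

lemma lookup_const_mult:
  fixes h :: "'a::comm_semiring_1 mpoly"
  shows "Poly_Mapping.lookup (Poly_Mapping.single 0 c * h) k = c * Poly_Mapping.lookup h k"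
  using lookup_monom_mult[of 0 c h k] by simp

lemma is_poly_zero: "is_poly n 0"
  by (simp add: is_poly_def)

lemma is_poly_add: "is_poly n f \<Longrightarrow> is_poly n g \<Longrightarrow> is_poly n (f + g)"
  unfolding is_poly_def using keys_add[of f g] by blast

lemma is_poly_mult: "is_poly n f \<Longrightarrow> is_poly n g \<Longrightarrow> is_poly n (f * g :: 'a::comm_semiring_1 mpoly)"
  unfolding is_poly_def using keys_mult[of f g] PP_add by blast

lemma is_poly_monom: "u \<in> PP n \<Longrightarrow> is_poly n (Poly_Mapping.single u c)"
  by (auto simp: is_poly_def)

lemma is_poly_const: "is_poly n (Poly_Mapping.single 0 c)"
  using is_poly_monom[OF PP_zero] .

lemma is_poly_sum: "(\<And>x. x \<in> A \<Longrightarrow> is_poly n (f x)) \<Longrightarrow> is_poly n (sum f A)"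
  by (induction A rule: infinite_finite_induct) (auto intro: is_poly_zero is_poly_add)

lemma ideal_zero: "is_ideal n J \<Longrightarrow> 0 \<in> J"
  unfolding is_ideal_def by blast

lemma ideal_poly: "is_ideal n J \<Longrightarrow> f \<in> J \<Longrightarrow> is_poly n f"
  unfolding is_ideal_def by blast

lemma ideal_add: "is_ideal n J \<Longrightarrow> f \<in> J \<Longrightarrow> g \<in> J \<Longrightarrow> f + g \<in> J"
  unfolding is_ideal_def by blast

lemma ideal_mult: "is_ideal n J \<Longrightarrow> f \<in> J \<Longrightarrow> is_poly n h \<Longrightarrow> h * f \<in> J"
  unfolding is_ideal_def by blast

lemma ideal_monom_mult: "is_ideal n J \<Longrightarrow> f \<in> J \<Longrightarrow> u \<in> PP n \<Longrightarrow> Poly_Mapping.single u c * f \<in> J"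
  using ideal_mult is_poly_monom by blast

lemma ideal_diff:
  assumes "is_ideal n J" "f \<in> J" "g \<in> J"
  shows "f - g \<in> J"
proof -
  have "Poly_Mapping.single 0 (- 1) * g = - g"
    by (rule poly_mapping_eqI) (simp add: lookup_const_mult)
  then show ?thesis
    using assms ideal_add ideal_monom_mult[OF assms(1,3) PP_zero, of "- 1"] by fastforce
qed

lemma ideal_sum: "is_ideal n J \<Longrightarrow> (\<And>x. x \<in> A \<Longrightarrow> f x \<in> J) \<Longrightarrow> sum f A \<in> J"
  by (induction A rule: infinite_finite_induct) (auto intro: ideal_zero ideal_add)

lemma ideal_gen_subset: "is_ideal n J \<Longrightarrow> F \<subseteq> J \<Longrightarrow> ideal_gen n F \<subseteq> J"
  unfolding ideal_gen_def by (auto intro!: ideal_sum ideal_mult)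

lemma is_ideal_ideal_gen:
  fixes F :: "'a::comm_ring_1 mpoly set"
  assumes "\<forall>g\<in>F. is_poly n g"
  shows "is_ideal n (ideal_gen n F)"
  unfolding is_ideal_def
proof (intro conjI ballI allI impI)
  fix f
  assume "f \<in> ideal_gen n F"
  then show "is_poly n f"
    using assms by (auto simp: ideal_gen_def intro!: is_poly_sum is_poly_mult)
next
  show "0 \<in> ideal_gen n F"
    unfolding ideal_gen_def by (rule CollectI, rule exI[of _ "\<lambda>_. 0"]) (auto simp: is_poly_zero)
next
  fix f g
  assume "f \<in> ideal_gen n F" "g \<in> ideal_gen n F"
  then obtain c d where "f = (\<Sum>g\<in>F. c g * g)" "\<forall>g\<in>F. is_poly n (c g)"
    "g = (\<Sum>g\<in>F. d g * g)" "\<forall>g\<in>F. is_poly n (d g)"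
    by (auto simp: ideal_gen_def)
  then show "f + g \<in> ideal_gen n F"
    unfolding ideal_gen_def
    by (intro CollectI exI[of _ "\<lambda>x. c x + d x"]) (auto simp: sum.distrib distrib_right is_poly_add)
next
  fix f and h :: "'a mpoly"
  assume "f \<in> ideal_gen n F" "is_poly n h"
  then obtain c where "f = (\<Sum>g\<in>F. c g * g)" "\<forall>g\<in>F. is_poly n (c g)"
    by (auto simp: ideal_gen_def)
  with \<open>is_poly n h\<close> show "h * f \<in> ideal_gen n F"
    unfolding ideal_gen_def
    by (intro CollectI exI[of _ "\<lambda>x. h * c x"]) (auto simp: sum_distrib_left mult.assoc is_poly_mult)
qed

lemma ideal_gen_mem:
  assumes "finite F" "g \<in> F"
  shows "g \<in> ideal_gen n (F :: 'a::comm_ring_1 mpoly set)"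
  unfolding ideal_gen_def
proof (intro CollectI exI conjI)
  show "g = (\<Sum>x\<in>F. (if x = g then 1 else 0) * x)"
    using assms by (simp add: if_distrib[of "\<lambda>c. c * _"] cong: if_cong)
  show "\<forall>x\<in>F. is_poly n (if x = g then 1 else 0 :: 'a mpoly)"
    by (auto simp: is_poly_zero is_poly_def PP_zero)
qed

context term_ordering
begin

lemma LT_monom_mult:
  fixes h :: "'a::idom mpoly"
  assumes h: "is_poly n h" "h \<noteq> 0" and "c \<noteq> 0" "u \<in> PP n"
  shows "is_poly n (Poly_Mapping.single u c * h)" "Poly_Mapping.single u c * h \<noteq> 0"
    "LT le (Poly_Mapping.single u c * h) = u + LT le h"
    "LC le (Poly_Mapping.single u c * h) = c * LC le h"
proof -
  let ?m = "Poly_Mapping.single u c * h"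
  show poly: "is_poly n ?m"
    using is_poly_mult[OF is_poly_monom[OF \<open>u \<in> PP n\<close>] h(1)] .
  have keys: "Poly_Mapping.keys ?m = (+) u ` Poly_Mapping.keys h"
    using keys_monom_mult[OF \<open>c \<noteq> 0\<close>] .
  then show "?m \<noteq> 0"
    using LT_in_keys[OF h] by auto
  have "le (u + s) (u + LT le h)" if "s \<in> Poly_Mapping.keys h" for s
    using ord_add_left_mono[OF _ LT_in_PP[OF h] \<open>u \<in> PP n\<close> le_LT[OF h(1) that]] that h(1)
    by (auto simp: is_poly_def)
  then show "LT le ?m = u + LT le h"
    using LT_eqI[OF poly] keys LT_in_keys[OF h] by auto
  then show "LC le ?m = c * LC le h"
    by (simp add: LC_def lookup_monom_mult)
qed

lemma LT_diff_lt:
  fixes f g :: "'a::comm_ring_1 mpoly"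
  assumes f: "is_poly n f" and g: "is_poly n g"
    and "LT le f = LT le g" "LC le f = LC le g" "f - g \<noteq> 0"
  shows "lt (LT le (f - g)) (LT le f)"
proof -
  have poly: "is_poly n (f - g)"
    using f g keys_diff[of f g] by (auto simp: is_poly_def)
  have key: "LT le (f - g) \<in> Poly_Mapping.keys f \<union> Poly_Mapping.keys g"
    using LT_in_keys[OF poly \<open>f - g \<noteq> 0\<close>] keys_diff[of f g] by blast
  then have "le (LT le (f - g)) (LT le f)"
    using le_LT[OF f] le_LT[OF g] assms(3) by auto
  moreover have "LT le (f - g) \<noteq> LT le f"
    using LT_in_keys[OF poly \<open>f - g \<noteq> 0\<close>] assms(3,4) by (auto simp: in_keys_iff lookup_minus LC_def)
  ultimately show ?thesis
    by (simp add: lt_def)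
qed

lemma LT_lincomb:
  fixes f g :: "'a::comm_ring_1 mpoly"
  assumes f: "is_poly n f" "f \<noteq> 0" and g: "is_poly n g"
    and "LT le f = LT le g" and nz: "r * LC le f + s * LC le g \<noteq> 0"
  defines "z \<equiv> Poly_Mapping.single 0 r * f + Poly_Mapping.single 0 s * g"
  shows "is_poly n z" "z \<noteq> 0" "LT le z = LT le f" "LC le z = r * LC le f + s * LC le g"
proof -
  show poly: "is_poly n z"
    unfolding z_def by (intro is_poly_add is_poly_mult is_poly_const f g)
  have lookup: "Poly_Mapping.lookup z (LT le f) = r * LC le f + s * LC le g"
    unfolding z_def using assms(4) by (simp add: lookup_add lookup_const_mult LC_def)
  then have key: "LT le f \<in> Poly_Mapping.keys z"
    using nz by (simp add: in_keys_iff)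
  then show "z \<noteq> 0"
    by auto
  have "Poly_Mapping.keys z \<subseteq> Poly_Mapping.keys f \<union> Poly_Mapping.keys g"
    unfolding z_def using keys_add keys_monom_mult_subset[of 0] by fastforce
  then have "\<forall>t\<in>Poly_Mapping.keys z. le t (LT le f)"
    using le_LT[OF f(1)] le_LT[OF g] assms(4) by auto
  then show "LT le z = LT le f"
    using LT_eqI[OF poly key] by blast
  with lookup show "LC le z = r * LC le f + s * LC le g"
    by (simp add: LC_def)
qed

end

section \<open>Strong Groebner bases over the integers\<close>

definition LM_covers :: "(pp \<Rightarrow> pp \<Rightarrow> bool) \<Rightarrow> int mpoly set \<Rightarrow> int mpoly set \<Rightarrow> bool"
  where "LM_covers le B J \<longleftrightarrow> (\<forall>f\<in>J. f \<noteq> 0 \<longrightarrow> (\<exists>g\<in>B. LM_dvd le g f))"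

lemma LM_dvd_trans: "LM_dvd le a b \<Longrightarrow> LM_dvd le b c \<Longrightarrow> LM_dvd le a c"
  unfolding LM_dvd_def using dvd_trans pp_dvd_trans by blast

lemma minimal_strong_GBD:
  assumes "minimal_strong_GB n le J B"
  shows "finite B" "B \<subseteq> J" "0 \<notin> B" "LM_covers le B J"
    "\<And>g g'. g \<in> B \<Longrightarrow> g' \<in> B \<Longrightarrow> LM_dvd le g g' \<Longrightarrow> g = g'"
  using assms ideal_gen_mem[of B _ n] unfolding minimal_strong_GB_def strong_GB_def LM_covers_def
  by auto

lemma Lcm_LC_minimal_strong_GB_dvd:
  assumes B1: "minimal_strong_GB n le J B1" and B2: "minimal_strong_GB n le J B2"
  shows "Lcm (LC le ` B1) dvd Lcm (LC le ` B2)"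
proof (rule Lcm_least)
  fix a
  assume "a \<in> LC le ` B1"
  then obtain b1 where b1: "b1 \<in> B1" "a = LC le b1"
    by blast
  note m1 = minimal_strong_GBD[OF B1] and m2 = minimal_strong_GBD[OF B2]
  have "b1 \<in> J" "b1 \<noteq> 0"
    using m1(2,3) b1(1) by auto
  then obtain b2 where b2: "b2 \<in> B2" "LM_dvd le b2 b1"
    using m2(4) unfolding LM_covers_def by blast
  have "b2 \<in> J" "b2 \<noteq> 0"
    using m2(2,3) b2(1) by auto
  then obtain b1' where b1': "b1' \<in> B1" "LM_dvd le b1' b2"
    using m1(4) unfolding LM_covers_def by blast
  have "b1' = b1"
    using m1(5) b1(1) b1' b2(2) LM_dvd_trans by blast
  then have "LC le b1 dvd LC le b2"
    using b1'(2) by (simp add: LM_dvd_def)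
  also have "LC le b2 dvd Lcm (LC le ` B2)"
    using b2(1) by simp
  finally show "a dvd Lcm (LC le ` B2)"
    using b1(2) by simp
qed

lemma lcm_sigma_eq:
  assumes "minimal_strong_GB n le J B"
  shows "lcm_sigma n le J = nat (Lcm (LC le ` B))"
  unfolding lcm_sigma_def
proof (rule the_equality)
  fix m
  assume "\<exists>B'. minimal_strong_GB n le J B' \<and> m = nat (Lcm (LC le ` B'))"
  then obtain B' where "minimal_strong_GB n le J B'" "m = nat (Lcm (LC le ` B'))"
    by blast
  with assms show "m = nat (Lcm (LC le ` B))"
    using Lcm_LC_minimal_strong_GB_dvd zdvd_antisym_nonneg by (metis Lcm_int_greater_eq_0)
qed (use assms in blast)

context term_ordering
begin

lemma ideal_gcd_lead:
  fixes J :: "int mpoly set"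
  assumes J: "is_ideal n J" and f: "f \<in> J" "f \<noteq> 0" and g: "g \<in> J" "g \<noteq> 0"
    and dvd: "pp_dvd (LT le g) (LT le f)"
  shows "\<exists>z\<in>J. z \<noteq> 0 \<and> LT le z = LT le f \<and> LC le z = gcd (LC le f) (LC le g)"
proof -
  have fp: "is_poly n f" and gp: "is_poly n g"
    using J f g ideal_poly by blast+
  obtain u where u: "u \<in> PP n" "LT le f = LT le g + u"
    using pp_dvd_PPE[OF dvd LT_in_PP[OF fp f(2)]] .
  define h where "h = Poly_Mapping.single u 1 * g"
  note h = LT_monom_mult[OF gp g(2) one_neq_zero u(1), folded h_def]
  have "h \<in> J"
    unfolding h_def using J g u by (simp add: ideal_monom_mult)
  have "LT le f = LT le h"
    using h(3) u by (simp add: add.commute)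
  obtain r s where rs: "r * LC le f + s * LC le h = gcd (LC le f) (LC le g)"
    using bezout_int h(4) by force
  moreover have "gcd (LC le f) (LC le g) \<noteq> 0"
    using LC_neq_zero[OF gp g(2)] by simp
  ultimately have "r * LC le f + s * LC le h \<noteq> 0"
    by simp
  note z = LT_lincomb[OF fp f(2) h(1) \<open>LT le f = LT le h\<close> this]
  have "Poly_Mapping.single 0 r * f + Poly_Mapping.single 0 s * h \<in> J"
    using J f(1) \<open>h \<in> J\<close> by (intro ideal_add ideal_monom_mult PP_zero)
  with z rs show ?thesis
    by metis
qed

lemma LM_dvd_monom_multiple:
  fixes b f :: "int mpoly"
  assumes b: "is_poly n b" and f: "is_poly n f" "f \<noteq> 0" and "LM_dvd le b f"
  obtains u q where "u \<in> PP n" "is_poly n (Poly_Mapping.single u q * b)"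
    "LT le (Poly_Mapping.single u q * b) = LT le f" "LC le (Poly_Mapping.single u q * b) = LC le f"
proof -
  obtain q where q: "LC le f = LC le b * q" and dvd: "pp_dvd (LT le b) (LT le f)"
    using \<open>LM_dvd le b f\<close> by (auto simp: LM_dvd_def)
  obtain u where u: "u \<in> PP n" "LT le f = LT le b + u"
    using pp_dvd_PPE[OF dvd LT_in_PP[OF f]] .
  have "b \<noteq> 0" "q \<noteq> 0"
    using q LC_neq_zero[OF f] by (auto simp: LC_def)
  from LT_monom_mult[OF b this u(1)] u q show thesis
    by (intro that[of u q]) (simp_all add: add.commute mult.commute)
qed

lemma LM_covers_reduction_step:
  fixes J B :: "int mpoly set"
  assumes J: "is_ideal n J" and B: "finite B" "B \<subseteq> J" and cover: "LM_covers le B J"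
    and f: "f \<in> J" "f \<noteq> 0"
  shows "\<exists>m\<in>ideal_gen n B. f - m = 0 \<or> lt (LT le (f - m)) (LT le f)"
proof -
  have fp: "is_poly n f"
    using ideal_poly[OF J f(1)] .
  obtain b where b: "b \<in> B" "LM_dvd le b f"
    using cover f unfolding LM_covers_def by blast
  obtain u q where m: "u \<in> PP n" "is_poly n (Poly_Mapping.single u q * b)"
    "LT le (Poly_Mapping.single u q * b) = LT le f" "LC le (Poly_Mapping.single u q * b) = LC le f"
    using LM_dvd_monom_multiple[OF ideal_poly[OF J] fp f(2) b(2)] b(1) B(2) by blast
  have "Poly_Mapping.single u q * b \<in> ideal_gen n B"
    using b(1) B ideal_poly[OF J] m(1) by (blast intro: ideal_monom_mult is_ideal_ideal_gen ideal_gen_mem)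
  moreover have "f - Poly_Mapping.single u q * b = 0 \<or> lt (LT le (f - Poly_Mapping.single u q * b)) (LT le f)"
    using LT_diff_lt[OF fp m(2)] m(3,4) by auto
  ultimately show ?thesis
    by blast
qed

lemma LM_covers_subset_ideal_gen:
  fixes J B :: "int mpoly set"
  assumes J: "is_ideal n J" and B: "finite B" "B \<subseteq> J" and cover: "LM_covers le B J"
  shows "J \<subseteq> ideal_gen n B"
proof
  let ?IG = "ideal_gen n B"
  have IG: "is_ideal n ?IG"
    using is_ideal_ideal_gen B(2) ideal_poly[OF J] by blast
  have "?IG \<subseteq> J"
    using ideal_gen_subset[OF J B(2)] .
  have by_LT: "\<forall>f\<in>J. f \<noteq> 0 \<longrightarrow> LT le f = t \<longrightarrow> f \<in> ?IG" if "t \<in> PP n" for t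
    using that
  proof (induction t rule: lt_induct)
    case (less t)
    show ?case
    proof (intro ballI impI)
      fix f
      assume f: "f \<in> J" "f \<noteq> 0" "LT le f = t"
      obtain m where m: "m \<in> ?IG" "f - m = 0 \<or> lt (LT le (f - m)) t"
        using LM_covers_reduction_step[OF J B cover f(1,2)] f(3) by blast
      have "f - m \<in> ?IG"
      proof (cases "f - m = 0")
        case False
        moreover have "f - m \<in> J"
          using ideal_diff[OF J f(1)] m(1) \<open>?IG \<subseteq> J\<close> by blast
        ultimately show ?thesis
          using m(2) less.IH LT_in_PP ideal_poly[OF J] by blast
      qed (simp add: ideal_zero[OF IG])
      then show "f \<in> ?IG"
        using ideal_add[OF IG _ m(1)] by fastforce
    qed
  qed
  show "f \<in> ?IG" if "f \<in> J" for f
  proof (cases "f = 0")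
    case False
    with that show ?thesis
      using by_LT[OF LT_in_PP[OF ideal_poly[OF J that] False]] by blast
  qed (simp add: ideal_zero[OF IG])
qed

lemma strong_GB_if_LM_covers:
  fixes J B :: "int mpoly set"
  assumes J: "is_ideal n J" and B: "finite B" "B \<subseteq> J" "0 \<notin> B" and cover: "LM_covers le B J"
  shows "strong_GB n le J B"
  unfolding strong_GB_def
proof (intro conjI)
  show "ideal_gen n B = J"
    using ideal_gen_subset[OF J B(2)] LM_covers_subset_ideal_gen[OF J B(1,2) cover] by blast
qed (use B cover ideal_poly[OF J] in \<open>auto simp: LM_covers_def\<close>)

lemma minimal_strong_GB_if_LM_covers:
  fixes J B :: "int mpoly set"
  assumes J: "is_ideal n J"
  shows "finite B \<Longrightarrow> B \<subseteq> J \<Longrightarrow> 0 \<notin> B \<Longrightarrow> LM_covers le B J \<Longrightarrow> \<exists>B'. minimal_strong_GB n le J B'"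
proof (induction "card B" arbitrary: B rule: less_induct)
  case less
  show ?case
  proof (cases "\<forall>g\<in>B. \<forall>g'\<in>B. g \<noteq> g' \<longrightarrow> \<not> LM_dvd le g g'")
    case True
    then show ?thesis
      using strong_GB_if_LM_covers[OF J less.prems] unfolding minimal_strong_GB_def by blast
  next
    case False
    then obtain g g' where g: "g \<in> B" "g' \<in> B" "g \<noteq> g'" "LM_dvd le g g'"
      by blast
    have "LM_covers le (B - {g'}) J"
      using less.prems(4) g LM_dvd_trans unfolding LM_covers_def by (metis insert_Diff insert_iff)
    moreover have "card (B - {g'}) < card B"
      using less.prems(1) g(2) by (rule card_Diff1_less)
    ultimately show ?thesis
      using less.hyps[of "B - {g'}"] less.prems(1-3) by blast
  qed
qed

lemma LM_covers_exists_if_finite_LC_values: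
  fixes J :: "int mpoly set"
  assumes J: "is_ideal n J" and "finite V"
    and lead: "\<And>f. f \<in> J \<Longrightarrow> f \<noteq> 0 \<Longrightarrow>
      \<exists>z\<in>J. z \<noteq> 0 \<and> LT le z = LT le f \<and> LC le z \<in> V \<and> LC le z dvd LC le f"
  shows "\<exists>B. finite B \<and> B \<subseteq> J \<and> 0 \<notin> B \<and> LM_covers le B J"
proof -
  define lead_terms where "lead_terms v = {LT le f | f. f \<in> J \<and> f \<noteq> 0 \<and> LC le f = v}" for v
  have "\<forall>v. \<exists>F. finite F \<and> F \<subseteq> lead_terms v \<and> (\<forall>s\<in>lead_terms v. \<exists>t\<in>F. pp_dvd t s)"
  proof
    fix v
    have "lead_terms v \<subseteq> PP n"
      unfolding lead_terms_def using LT_in_PP ideal_poly[OF J] by blast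
    then show "\<exists>F. finite F \<and> F \<subseteq> lead_terms v \<and> (\<forall>s\<in>lead_terms v. \<exists>t\<in>F. pp_dvd t s)"
      by (rule dickson)
  qed
  then obtain F where F: "\<And>v. finite (F v)" "\<And>v. F v \<subseteq> lead_terms v"
    "\<And>v. \<forall>s\<in>lead_terms v. \<exists>t\<in>F v. pp_dvd t s"
    by metis
  have "\<forall>v t. \<exists>f. t \<in> F v \<longrightarrow> f \<in> J \<and> f \<noteq> 0 \<and> LC le f = v \<and> LT le f = t"
    using F(2) unfolding lead_terms_def by blast
  then obtain wit where wit: "\<And>v t. t \<in> F v \<Longrightarrow>
      wit v t \<in> J \<and> wit v t \<noteq> 0 \<and> LC le (wit v t) = v \<and> LT le (wit v t) = t"
    by metis
  define B where "B = (\<Union>v\<in>V. wit v ` F v)"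
  have "LM_covers le B J"
    unfolding LM_covers_def
  proof (intro ballI impI)
    fix f
    assume "f \<in> J" "f \<noteq> 0"
    then obtain z where z: "z \<in> J" "z \<noteq> 0" "LT le z = LT le f" "LC le z \<in> V" "LC le z dvd LC le f"
      using lead by blast
    then have "LT le f \<in> lead_terms (LC le z)"
      unfolding lead_terms_def by (intro CollectI exI[of _ z]) simp
    then obtain s where s: "s \<in> F (LC le z)" "pp_dvd s (LT le f)"
      using F(3) by blast
    then have "wit (LC le z) s \<in> B" "LM_dvd le (wit (LC le z) s) f"
      using wit[OF s(1)] z(4,5) unfolding B_def LM_dvd_def by auto
    then show "\<exists>g\<in>B. LM_dvd le g f"
      by blast
  qed
  moreover have "finite B" "B \<subseteq> J" "0 \<notin> B"
    unfolding B_def using \<open>finite V\<close> F(1) wit by fastforce+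
  ultimately show ?thesis
    by blast
qed

text \<open>The leading coefficients that matter are gcds with those of finitely many elements whose
  leading terms generate all leading terms.\<close>

lemma LM_covers_exists:
  fixes J :: "int mpoly set"
  assumes J: "is_ideal n J"
  shows "\<exists>B. finite B \<and> B \<subseteq> J \<and> 0 \<notin> B \<and> LM_covers le B J"
proof -
  have lead_PP: "{LT le f | f. f \<in> J \<and> f \<noteq> 0} \<subseteq> PP n"
    using LT_in_PP ideal_poly[OF J] by blast
  obtain T where T: "finite T" "T \<subseteq> {LT le f | f. f \<in> J \<and> f \<noteq> 0}"
    "\<forall>s\<in>{LT le f | f. f \<in> J \<and> f \<noteq> 0}. \<exists>t\<in>T. pp_dvd t s"
    using dickson[OF lead_PP] by (elim exE conjE) (rule that)
  have "\<forall>t\<in>T. \<exists>f. f \<in> J \<and> f \<noteq> 0 \<and> LT le f = t"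
    using T(2) by blast
  then obtain w where w: "\<forall>t\<in>T. w t \<in> J \<and> w t \<noteq> 0 \<and> LT le (w t) = t"
    by (metis (no_types))
  define V where "V = (\<Union>t\<in>T. {v. v dvd LC le (w t)})"
  have "finite V"
    unfolding V_def using T(1) w LC_neq_zero ideal_poly[OF J] by (auto intro!: finite_divisors_int)
  moreover have "\<exists>z\<in>J. z \<noteq> 0 \<and> LT le z = LT le f \<and> LC le z \<in> V \<and> LC le z dvd LC le f"
    if f: "f \<in> J" "f \<noteq> 0" for f
  proof -
    have "LT le f \<in> {LT le f | f. f \<in> J \<and> f \<noteq> 0}"
      using f by blast
    then obtain t where t: "t \<in> T" "pp_dvd t (LT le f)"
      using T(3) by blast
    then obtain z where "z \<in> J" "z \<noteq> 0" "LT le z = LT le f" "LC le z = gcd (LC le f) (LC le (w t))"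
      using ideal_gcd_lead[OF J f, of "w t"] w by auto
    moreover have "gcd (LC le f) (LC le (w t)) \<in> V"
      unfolding V_def using t(1) by auto
    ultimately show ?thesis
      by auto
  qed
  ultimately show ?thesis
    using LM_covers_exists_if_finite_LC_values[OF J] by blast
qed

lemma minimal_strong_GB_exists:
  "is_ideal n (J :: int mpoly set) \<Longrightarrow> \<exists>B. minimal_strong_GB n le J B"
  using LM_covers_exists minimal_strong_GB_if_LM_covers by blast

definition is_LT_mod :: "int \<Rightarrow> int mpoly \<Rightarrow> pp \<Rightarrow> bool"
  where "is_LT_mod p f t \<longleftrightarrow> t \<in> PP n \<and> \<not> p dvd Poly_Mapping.lookup f t \<and>
    (\<forall>k\<in>PP n. lt t k \<longrightarrow> p dvd Poly_Mapping.lookup f k)"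

lemma is_LT_mod_cancel:
  fixes f b :: "int mpoly"
  assumes "is_LT_mod p f t" "prime p" "\<not> p dvd \<beta>" "p dvd \<alpha>"
  shows "is_LT_mod p (Poly_Mapping.single 0 \<beta> * f - Poly_Mapping.single u \<alpha> * b) t"
proof -
  have "p dvd Poly_Mapping.lookup (Poly_Mapping.single u \<alpha> * b) k" for k
    using \<open>p dvd \<alpha>\<close> by (simp add: lookup_monom_mult_if)
  then have "p dvd Poly_Mapping.lookup (Poly_Mapping.single 0 \<beta> * f - Poly_Mapping.single u \<alpha> * b) k
      \<longleftrightarrow> p dvd \<beta> * Poly_Mapping.lookup f k" for k
    by (simp add: lookup_minus lookup_const_mult dvd_diff_left_iff)
  with assms show ?thesis
    unfolding is_LT_mod_def by (simp add: prime_dvd_mult_iff)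
qed

lemma is_LT_mod_in_keys: "is_LT_mod p f t \<Longrightarrow> t \<in> Poly_Mapping.keys f"
  by (auto simp: is_LT_mod_def in_keys_iff)

lemma is_LT_mod_descent_step:
  fixes J B :: "int mpoly set"
  assumes J: "is_ideal n J" and B: "B \<subseteq> J" "LM_covers le B J"
    and p: "prime p" "\<forall>b\<in>B. \<not> p dvd LC le b"
    and f: "f \<in> J" "is_LT_mod p f t" "LT le f \<noteq> t"
  shows "\<exists>f'\<in>J. is_LT_mod p f' t \<and> lt (LT le f') (LT le f)"
proof -
  have fp: "is_poly n f" and "f \<noteq> 0"
    using ideal_poly[OF J f(1)] is_LT_mod_in_keys[OF f(2)] by auto
  have "lt t (LT le f)"
    using le_LT[OF fp is_LT_mod_in_keys[OF f(2)]] f(3) by (simp add: lt_def)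
  then have "p dvd LC le f"
    using f(2) LT_in_PP[OF fp \<open>f \<noteq> 0\<close>] unfolding is_LT_mod_def LC_def by blast
  obtain b where b: "b \<in> B" "LM_dvd le b f"
    using B(2) f(1) \<open>f \<noteq> 0\<close> unfolding LM_covers_def by blast
  have "b \<in> J"
    using B(1) b(1) by blast
  then have bp: "is_poly n b" and "b \<noteq> 0"
    using ideal_poly[OF J] b(2) LC_neq_zero[OF fp \<open>f \<noteq> 0\<close>] by (auto simp: LM_dvd_def LC_def)
  obtain u where u: "u \<in> PP n" "LT le f = LT le b + u"
    using b(2) pp_dvd_PPE LT_in_PP[OF fp \<open>f \<noteq> 0\<close>] unfolding LM_dvd_def by blast
  define f1 where "f1 = Poly_Mapping.single 0 (LC le b) * f"
  define f2 where "f2 = Poly_Mapping.single u (LC le f) * b"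
  note m1 = LT_monom_mult[OF fp \<open>f \<noteq> 0\<close> LC_neq_zero[OF bp \<open>b \<noteq> 0\<close>] PP_zero, folded f1_def]
  note m2 = LT_monom_mult[OF bp \<open>b \<noteq> 0\<close> LC_neq_zero[OF fp \<open>f \<noteq> 0\<close>] u(1), folded f2_def]
  have mod: "is_LT_mod p (f1 - f2) t"
    unfolding f1_def f2_def using is_LT_mod_cancel f(2) p b(1) \<open>p dvd LC le f\<close> by blast
  then have "f1 - f2 \<noteq> 0"
    using is_LT_mod_in_keys by fastforce
  have "f1 - f2 \<in> J"
    unfolding f1_def f2_def using J f(1) \<open>b \<in> J\<close> u(1) by (intro ideal_diff ideal_monom_mult PP_zero)
  moreover have "lt (LT le (f1 - f2)) (LT le f)"
    using LT_diff_lt[OF m1(1) m2(1)] m1(3,4) m2(3,4) u(2) \<open>f1 - f2 \<noteq> 0\<close>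
    by (simp add: add.commute mult.commute)
  ultimately show ?thesis
    using mod by blast
qed

text \<open>Cancelling leading terms against a cover whose leading coefficients are prime to \<open>p\<close>
  never touches the leading term modulo \<open>p\<close>, so the descent ends exactly there.\<close>

lemma is_LT_mod_imp_LT:
  fixes J B :: "int mpoly set"
  assumes J: "is_ideal n J" and B: "B \<subseteq> J" "LM_covers le B J"
    and p: "prime p" "\<forall>b\<in>B. \<not> p dvd LC le b"
    and f: "f \<in> J" "is_LT_mod p f t"
  shows "\<exists>f'\<in>J. f' \<noteq> 0 \<and> LT le f' = t"
proof -
  have nonzero: "f \<noteq> 0" if "is_LT_mod p f t" for f
    using is_LT_mod_in_keys[OF that] by auto
  have "\<forall>f\<in>J. is_LT_mod p f t \<longrightarrow> LT le f = s \<longrightarrow> (\<exists>f'\<in>J. f' \<noteq> 0 \<and> LT le f' = t)"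
    if "s \<in> PP n" for s
    using that
  proof (induction s rule: lt_induct)
    case (less s)
    then show ?case
      using is_LT_mod_descent_step[OF J B p] nonzero LT_in_PP ideal_poly[OF J] by metis
  qed
  then show ?thesis
    using f nonzero LT_in_PP ideal_poly[OF J] by blast
qed

end

section \<open>Denominators and primitive parts\<close>

definition of_int_mpoly :: "int mpoly \<Rightarrow> rat mpoly"
  where "of_int_mpoly f = Poly_Mapping.map of_int f"

lemma lookup_of_int_mpoly: "Poly_Mapping.lookup (of_int_mpoly f) k = of_int (Poly_Mapping.lookup f k)"
  by (simp add: of_int_mpoly_def map.rep_eq when_def)

lemma keys_of_int_mpoly: "Poly_Mapping.keys (of_int_mpoly f) = Poly_Mapping.keys f"
  by (auto simp: in_keys_iff lookup_of_int_mpoly)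

lemma of_int_mpoly_eq_0_iff: "of_int_mpoly f = 0 \<longleftrightarrow> f = 0"
  by (metis keys_eq_empty keys_of_int_mpoly)

lemma is_poly_of_int_mpoly: "is_poly n (of_int_mpoly f) \<longleftrightarrow> is_poly n f"
  by (simp add: is_poly_def keys_of_int_mpoly)

lemma LT_of_int_mpoly: "LT le (of_int_mpoly f) = LT le f"
  unfolding LT_def keys_of_int_mpoly ..

lemma of_int_mpoly_add: "of_int_mpoly (f + g) = of_int_mpoly f + of_int_mpoly g"
  by (rule poly_mapping_eqI) (simp add: lookup_of_int_mpoly lookup_add)

lemma of_int_mpoly_sum: "of_int_mpoly (sum f A) = (\<Sum>x\<in>A. of_int_mpoly (f x))"
  by (induction A rule: infinite_finite_induct)
    (auto simp: of_int_mpoly_add of_int_mpoly_eq_0_iff[THEN iffD2])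

lemma of_int_mpoly_monom_mult:
  "of_int_mpoly (Poly_Mapping.single u c * h) = Poly_Mapping.single u (of_int c) * of_int_mpoly h"
  by (rule poly_mapping_eqI) (simp add: lookup_of_int_mpoly lookup_monom_mult_if)

lemma of_int_mpoly_mult: "of_int_mpoly (f * g) = of_int_mpoly f * of_int_mpoly g"
proof (induction f rule: update_induct)
  case const
  then show ?case
    by (simp add: of_int_mpoly_eq_0_iff[THEN iffD2])
next
  case (update f a b)
  have single: "of_int_mpoly (Poly_Mapping.single a b) = Poly_Mapping.single a (of_int b)"
    by (rule poly_mapping_eqI) (simp add: lookup_of_int_mpoly lookup_single when_def)
  show ?case
    using update(1) keys_of_int_mpoly[of f]
    by (simp add: update_eq_add_single distrib_right of_int_mpoly_add update(3) of_int_mpoly_monom_mult single)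
qed

lemma den_pos: "den f > 0"
proof -
  have "snd (quotient_of q) > 0" for q
    by (rule quotient_of_denom_pos')
  then have "0 \<notin> (\<lambda>t. nat (snd (quotient_of (Poly_Mapping.lookup f t)))) ` Poly_Mapping.keys f"
    by (metis (no_types, lifting) image_iff zero_less_nat_eq less_irrefl)
  then have "den f \<noteq> 0"
    unfolding den_def by (simp add: Lcm_0_iff)
  then show ?thesis
    by (simp only: gr0I)
qed

lemma lookup_mult_den_Ints: "Poly_Mapping.lookup f k * of_nat (den f) \<in> \<int>"
proof (cases "k \<in> Poly_Mapping.keys f")
  case True
  obtain a b where ab: "quotient_of (Poly_Mapping.lookup f k) = (a, b)"
    by fastforce
  have "nat b dvd den f"
    unfolding den_def using True ab by (force intro: dvd_Lcm)
  then obtain e where "int (den f) = b * e"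
    using quotient_of_denom_pos[OF ab] by (metis int_dvd_int_iff int_nat_eq less_le_not_le dvdE)
  then have "(of_nat (den f) :: rat) = of_int b * of_int e"
    by (metis of_int_mult of_int_of_nat_eq)
  then have "Poly_Mapping.lookup f k * of_nat (den f) = of_int (a * e)"
    using quotient_of_div[OF ab] quotient_of_denom_pos[OF ab] by simp
  then show ?thesis
    by simp
qed (simp add: in_keys_iff)

lemma den_dvd_if_mult_Ints:
  assumes "E > 0" "\<And>k. Poly_Mapping.lookup f k * of_int E \<in> \<int>"
  shows "int (den f) dvd E"
proof -
  have "nat (snd (quotient_of (Poly_Mapping.lookup f k))) dvd nat E" if "k \<in> Poly_Mapping.keys f" for k
  proof -
    obtain a b where ab: "quotient_of (Poly_Mapping.lookup f k) = (a, b)"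
      by fastforce
    obtain m where m: "Poly_Mapping.lookup f k * of_int E = of_int m"
      using assms(2) Ints_cases by metis
    have "b > 0" "coprime a b"
      using quotient_of_denom_pos quotient_of_coprime ab by blast+
    moreover have "a * E = m * b"
      using m quotient_of_div[OF ab] \<open>b > 0\<close> by (simp add: field_simps flip: of_int_mult)
    ultimately have "b dvd E"
      by (metis coprime_commute coprime_dvd_mult_right_iff dvd_triv_right)
    with \<open>b > 0\<close> ab show ?thesis
      using assms(1) by (simp add: nat_dvd_iff)
  qed
  then have "den f dvd nat E"
    unfolding den_def by (intro Lcm_least) blast
  then show ?thesis
    using assms(1) by (metis int_dvd_int_iff nat_0_le order_less_imp_le)
qed

lemma rat_to_int_Ints: "q \<in> \<int> \<Longrightarrow> of_int (rat_to_int q) = q"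
  by (auto elim!: Ints_cases simp: rat_to_int_def quotient_of_int)

definition clear_den :: "rat mpoly \<Rightarrow> int mpoly"
  where "clear_den f = Poly_Mapping.map (\<lambda>q. rat_to_int (q * of_nat (den f))) f"

definition int_content :: "int mpoly \<Rightarrow> int"
  where "int_content f = Gcd (Poly_Mapping.lookup f ` Poly_Mapping.keys f)"

lemma of_int_clear_den: "of_int (Poly_Mapping.lookup (clear_den f) k) = Poly_Mapping.lookup f k * of_nat (den f)"
  using rat_to_int_Ints[OF lookup_mult_den_Ints]
  by (simp add: clear_den_def map.rep_eq when_def rat_to_int_def)

lemma lookup_prim: "Poly_Mapping.lookup (prim f) k = Poly_Mapping.lookup (clear_den f) k div int_content (clear_den f)"
  unfolding prim_def Let_def clear_den_def int_content_def by (simp add: map.rep_eq when_def)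

lemma int_content_dvd: "int_content f dvd Poly_Mapping.lookup f k"
  unfolding int_content_def by (cases "k \<in> Poly_Mapping.keys f") (simp_all add: in_keys_iff)

text \<open>Dividing \<open>den g \<cdot> g\<close> by its content \<open>c\<close> keeps the coefficients integral, so
  \<open>den g\<close> divides \<open>den g / c\<close>.\<close>

lemma int_content_clear_den_eq_1:
  assumes "Poly_Mapping.lookup g t0 = 1"
  shows "int_content (clear_den g) = 1"
proof -
  define D where "D = int (den g)"
  define c where "c = int_content (clear_den g)"
  have "D > 0"
    unfolding D_def using den_pos by simp
  have "Poly_Mapping.lookup (clear_den g) t0 = D"
    using of_int_clear_den[of g t0] assms unfolding D_def by (metis mult_1 of_int_eq_iff of_int_of_nat_eq)
  then have "c dvd D"
    unfolding c_def by (metis int_content_dvd)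
  have "c \<noteq> 0"
    unfolding c_def int_content_def using \<open>Poly_Mapping.lookup (clear_den g) t0 = D\<close> \<open>D > 0\<close>
    by (force simp: Gcd_0_iff in_keys_iff)
  then have "c > 0"
    unfolding c_def int_content_def using Gcd_int_greater_eq_0 by (simp add: less_le)
  define E where "E = D div c"
  have DE: "D = E * c"
    unfolding E_def using \<open>c dvd D\<close> by simp
  then have "E > 0"
    using \<open>D > 0\<close> \<open>c > 0\<close> by (simp add: zero_less_mult_iff)
  have "Poly_Mapping.lookup g k * of_int E \<in> \<int>" for k
  proof -
    obtain m where m: "Poly_Mapping.lookup (clear_den g) k = c * m"
      using int_content_dvd unfolding c_def by blast
    have "of_int (c * m) = Poly_Mapping.lookup g k * of_int (E * c)"
      using of_int_clear_den[of g k] m DE unfolding D_def by (metis of_int_of_nat_eq)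
    then have "Poly_Mapping.lookup g k * of_int E = of_int m"
      using \<open>c > 0\<close> by (simp add: field_simps)
    then show ?thesis
      by simp
  qed
  then have "D dvd E"
    unfolding D_def using den_dvd_if_mult_Ints[OF \<open>E > 0\<close>] by blast
  then have "E = D"
    using zdvd_antisym_nonneg[of E D] DE \<open>E > 0\<close> \<open>D > 0\<close> by (simp add: less_imp_le)
  then show ?thesis
    using DE \<open>D > 0\<close> unfolding c_def by auto
qed

lemma prim_eq_den_mult:
  assumes "Poly_Mapping.lookup g t0 = 1"
  shows "of_int (Poly_Mapping.lookup (prim g) k) = Poly_Mapping.lookup g k * of_nat (den g)"
    and "int_content (prim g) = 1"
proof -
  have "prim g = clear_den g"
    by (rule poly_mapping_eqI) (simp add: lookup_prim int_content_clear_den_eq_1[OF assms])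
  then show "of_int (Poly_Mapping.lookup (prim g) k) = Poly_Mapping.lookup g k * of_nat (den g)"
    and "int_content (prim g) = 1"
    using of_int_clear_den int_content_clear_den_eq_1[OF assms] by simp_all
qed

context term_ordering
begin

lemma prim_monic:
  assumes g: "is_poly n g" "g \<noteq> 0" "LC le g = 1"
  shows "Poly_Mapping.keys (prim g) = Poly_Mapping.keys g" "is_poly n (prim g)" "prim g \<noteq> 0"
    "LT le (prim g) = LT le g" "LC le (prim g) = int (den g)"
    "of_int_mpoly (prim g) = Poly_Mapping.single 0 (of_nat (den g)) * g"
    "prime p \<Longrightarrow> \<exists>k\<in>Poly_Mapping.keys g. \<not> p dvd Poly_Mapping.lookup (prim g) k"
proof -
  have lead: "Poly_Mapping.lookup g (LT le g) = 1"
    using g(3) by (simp add: LC_def)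
  note prim = prim_eq_den_mult[OF lead]
  have "of_nat (den g) \<noteq> (0 :: rat)"
    using den_pos[of g] by simp
  then have "Poly_Mapping.lookup (prim g) k = 0 \<longleftrightarrow> Poly_Mapping.lookup g k = 0" for k
    using prim(1)[of k] by (metis mult_eq_0_iff of_int_eq_0_iff)
  then show keys: "Poly_Mapping.keys (prim g) = Poly_Mapping.keys g"
    by (simp add: set_eq_iff in_keys_iff)
  then show "is_poly n (prim g)" and "prim g \<noteq> 0"
    using g(1,2) by (auto simp: is_poly_def simp flip: keys_eq_empty)
  show LT: "LT le (prim g) = LT le g"
    unfolding LT_def keys ..
  show "LC le (prim g) = int (den g)"
    using prim(1)[of "LT le g"] lead LT by (simp add: LC_def)
  show "of_int_mpoly (prim g) = Poly_Mapping.single 0 (of_nat (den g)) * g"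
    by (rule poly_mapping_eqI) (simp only: lookup_const_mult lookup_of_int_mpoly prim(1) mult.commute[of _ "of_nat (den g)"])
  show "\<exists>k\<in>Poly_Mapping.keys g. \<not> p dvd Poly_Mapping.lookup (prim g) k" if "prime p"
  proof (rule ccontr)
    assume "\<not> ?thesis"
    then have "p dvd int_content (prim g)"
      using keys by (auto simp: int_content_def dvd_Gcd_iff)
    with prim(2) that show False
      using not_prime_unit by auto
  qed
qed

end

lemma prime_dvd_Lcm_iff:
  fixes p :: "'a::{factorial_semiring_gcd, semiring_Gcd}"
  assumes "prime p" "finite A"
  shows "p dvd Lcm A \<longleftrightarrow> (\<exists>a\<in>A. p dvd a)"
  using assms(2)
proof (induction A rule: finite_induct)
  case empty
  then show ?case
    using assms(1) by (simp add: not_prime_unit)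
next
  case (insert a A)
  have "p dvd lcm a (Lcm A) \<longleftrightarrow> p dvd a \<or> p dvd Lcm A"
    using prime_dvd_mult_iff[OF assms(1)] dvd_trans[OF _ lcm_least[OF dvd_triv_left dvd_triv_right]]
    by (meson dvd_lcm1 dvd_lcm2 dvd_trans)
  then show ?case
    using insert by simp
qed

lemma rad_eqI:
  assumes "m \<noteq> 0" "k \<noteq> 0" "\<And>p. prime p \<Longrightarrow> p dvd m \<longleftrightarrow> p dvd k"
  shows "rad m = rad k"
proof -
  have "prime_factors m = prime_factors k"
    using assms by (auto simp: in_prime_factors_iff)
  then show ?thesis
    by (simp add: rad_def)
qed

section \<open>The primitive ideal of a reduced Groebner basis\<close>

locale reduced_basis = term_ordering +
  fixes I G :: "rat mpoly set"
  assumes ideal_I: "is_ideal n I" and reduced: "reduced_GB n le I G"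
begin

abbreviation prim_ideal :: "int mpoly set"
  where "prim_ideal \<equiv> ideal_gen n (prim ` G)"

lemma finite_G: "finite G"
  using reduced by (simp add: reduced_GB_def)

lemma G_subset_I: "G \<subseteq> I"
  using reduced by (simp add: reduced_GB_def)

lemma G_is_poly: "g \<in> G \<Longrightarrow> is_poly n g"
  using G_subset_I ideal_poly[OF ideal_I] by blast

lemma G_nonzero: "g \<in> G \<Longrightarrow> g \<noteq> 0"
  using reduced by (auto simp: reduced_GB_def)

lemma G_LC: "g \<in> G \<Longrightarrow> LC le g = 1"
  using reduced by (simp add: reduced_GB_def)

lemma G_covers: "f \<in> I \<Longrightarrow> f \<noteq> 0 \<Longrightarrow> \<exists>g\<in>G. pp_dvd (LT le g) (LT le f)"
  using reduced by (simp add: reduced_GB_def)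

lemma G_reduced:
  assumes "g \<in> G" "g' \<in> G" "t \<in> Poly_Mapping.keys g" "pp_dvd (LT le g') t"
  shows "g' = g"
proof -
  have "\<forall>g\<in>G. \<forall>g'\<in>G. g \<noteq> g' \<longrightarrow> (\<forall>t\<in>Poly_Mapping.keys g. \<not> pp_dvd (LT le g') t)"
    using reduced by (simp add: reduced_GB_def)
  then show ?thesis
    using assms by (metis (no_types))
qed

lemma is_ideal_prim_ideal: "is_ideal n prim_ideal"
proof (rule is_ideal_ideal_gen, intro ballI)
  fix q
  assume "q \<in> prim ` G"
  then obtain g where "g \<in> G" "q = prim g"
    by blast
  then show "is_poly n q"
    using prim_monic(2)[OF G_is_poly G_nonzero G_LC] by blast
qed

lemma prim_mem_prim_ideal: "g \<in> G \<Longrightarrow> prim g \<in> prim_ideal"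
  using ideal_gen_mem finite_G by blast

lemma of_int_mpoly_mem_I:
  assumes "f \<in> prim_ideal"
  shows "of_int_mpoly f \<in> I"
proof -
  obtain c where f: "f = (\<Sum>q\<in>prim ` G. c q * q)" and c: "\<forall>q\<in>prim ` G. is_poly n (c q)"
    using assms by (auto simp: ideal_gen_def)
  have "of_int_mpoly (prim g) \<in> I" if "g \<in> G" for g
  proof -
    have "Poly_Mapping.single 0 (of_nat (den g)) * g \<in> I"
      using G_subset_I that ideal_monom_mult[OF ideal_I _ PP_zero] by blast
    then show ?thesis
      using prim_monic(6)[OF G_is_poly[OF that] G_nonzero[OF that] G_LC[OF that]] by simp
  qed
  then show ?thesis
    unfolding f of_int_mpoly_sum of_int_mpoly_mult
    using c by (auto intro!: ideal_sum[OF ideal_I] ideal_mult[OF ideal_I] simp: is_poly_of_int_mpoly)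
qed

lemma prim_ideal_covers: "f \<in> prim_ideal \<Longrightarrow> f \<noteq> 0 \<Longrightarrow> \<exists>g\<in>G. pp_dvd (LT le g) (LT le f)"
  using G_covers[OF of_int_mpoly_mem_I] of_int_mpoly_eq_0_iff LT_of_int_mpoly by metis

lemma LC_dvd_den:
  assumes B: "minimal_strong_GB n le prim_ideal B" and "b \<in> B"
  shows "\<exists>g\<in>G. LC le b dvd int (den g)"
proof -
  note min = minimal_strong_GBD[OF B]
  have b: "b \<in> prim_ideal" "b \<noteq> 0"
    using min(2,3) assms(2) by auto
  obtain g where g: "g \<in> G" "pp_dvd (LT le g) (LT le b)"
    using prim_ideal_covers b by blast
  have "prim g \<in> prim_ideal" "prim g \<noteq> 0" "LT le (prim g) = LT le g" "LC le (prim g) = int (den g)"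
    using prim_mem_prim_ideal[OF g(1)] prim_monic(3-5)[OF G_is_poly[OF g(1)] G_nonzero[OF g(1)] G_LC[OF g(1)]]
    by auto
  then obtain z where z: "z \<in> prim_ideal" "z \<noteq> 0" "LT le z = LT le b"
    "LC le z = gcd (LC le b) (int (den g))"
    using ideal_gcd_lead[OF is_ideal_prim_ideal b, of "prim g"] g(2) by auto
  then obtain b' where b': "b' \<in> B" "LM_dvd le b' z"
    using min(4) unfolding LM_covers_def by blast
  then have "LM_dvd le b' b"
    using z(3,4) by (auto simp: LM_dvd_def intro: dvd_trans)
  then have "b' = b"
    using min(5) b'(1) assms(2) by blast
  then have "LC le b dvd gcd (LC le b) (int (den g))"
    using b'(2) z(4) by (simp add: LM_dvd_def)
  with g(1) show ?thesis
    by (auto intro: dvd_trans)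
qed

lemma prime_dvd_den_imp_dvd_LC:
  assumes B: "minimal_strong_GB n le prim_ideal B" and g: "g \<in> G"
    and p: "prime p" "p dvd int (den g)"
  shows "\<exists>b\<in>B. p dvd LC le b"
proof (rule ccontr)
  assume "\<not> ?thesis"
  then have coprime_LC: "\<forall>b\<in>B. \<not> p dvd LC le b"
    by blast
  note min = minimal_strong_GBD[OF B]
  note prim = prim_monic[OF G_is_poly[OF g] G_nonzero[OF g] G_LC[OF g]]
  define S where "S = {k \<in> Poly_Mapping.keys g. \<not> p dvd Poly_Mapping.lookup (prim g) k}"
  have "finite S" "S \<noteq> {}" "S \<subseteq> PP n"
    using prim(7)[OF p(1)] G_is_poly[OF g] unfolding S_def is_poly_def by auto
  then obtain ts where ts: "ts \<in> S" "\<forall>s\<in>S. le s ts"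
    using ord_maximum_exists by blast
  have "is_LT_mod p (prim g) ts"
    unfolding is_LT_mod_def
  proof (intro conjI ballI impI)
    show "ts \<in> PP n" "\<not> p dvd Poly_Mapping.lookup (prim g) ts"
      using ts(1) \<open>S \<subseteq> PP n\<close> unfolding S_def by auto
    fix k
    assume "k \<in> PP n" "lt ts k"
    then show "p dvd Poly_Mapping.lookup (prim g) k"
      using ts prim(1) ord_antisym \<open>ts \<in> PP n\<close> unfolding S_def lt_def by (force simp: in_keys_iff)
  qed
  then obtain f where "f \<in> prim_ideal" "f \<noteq> 0" "LT le f = ts"
    using is_LT_mod_imp_LT[OF is_ideal_prim_ideal min(2,4) p(1)] prim_mem_prim_ideal[OF g] coprime_LC
    by blast
  then obtain g' where "g' \<in> G" "pp_dvd (LT le g') ts"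
    using prim_ideal_covers by blast
  then have "ts = LT le g"
    using G_reduced[OF g] key_pp_dvd_LT_eq G_is_poly[OF g] ts(1) unfolding S_def by blast
  then show False
    using ts(1) prim(5) p(2) unfolding S_def LC_def by (simp add: prim(4)[symmetric])
qed

lemma prime_dvd_den_set_iff:
  assumes "minimal_strong_GB n le prim_ideal B" "prime p"
  shows "p dvd den_set G \<longleftrightarrow> int p dvd Lcm (LC le ` B)"
proof -
  have "prime (int p)"
    using assms(2) by simp
  then have "int p dvd Lcm (LC le ` B) \<longleftrightarrow> (\<exists>b\<in>B. int p dvd LC le b)"
    using prime_dvd_Lcm_iff minimal_strong_GBD(1)[OF assms(1)] by blast
  also have "\<dots> \<longleftrightarrow> (\<exists>g\<in>G. int p dvd int (den g))"
    using LC_dvd_den[OF assms(1)] prime_dvd_den_imp_dvd_LC[OF assms(1) _ \<open>prime (int p)\<close>]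
    by (meson dvd_trans)
  also have "\<dots> \<longleftrightarrow> p dvd den_set G"
    unfolding den_set_def using prime_dvd_Lcm_iff[OF assms(2)] finite_G by simp
  finally show ?thesis ..
qed

lemma den_set_neq_zero: "den_set G \<noteq> 0"
proof -
  have "0 \<notin> den ` G"
    using den_pos by (metis image_iff less_irrefl)
  then show ?thesis
    unfolding den_set_def using finite_G by (simp add: Lcm_0_iff)
qed

lemma Lcm_LC_neq_zero:
  assumes "minimal_strong_GB n le prim_ideal B"
  shows "Lcm (LC le ` B) \<noteq> 0"
proof -
  note min = minimal_strong_GBD[OF assms]
  have "0 \<notin> LC le ` B"
    using min(2,3) LC_neq_zero ideal_poly[OF is_ideal_prim_ideal] by fastforce
  then show ?thesis
    using min(1) by (simp add: Lcm_0_iff)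
qed

end

theorem theorem3p11:
  fixes n :: nat and le :: "pp \<Rightarrow> pp \<Rightarrow> bool"
    and I :: "rat mpoly set" and G :: "rat mpoly set"
  assumes "term_order n le"
    and "is_ideal n I" and "I \<noteq> {0}"
    and "reduced_GB n le I G"
  shows "rad (den_set G) = rad (lcm_sigma n le (ideal_gen n (prim ` G)))"
proof -
  interpret reduced_basis n le I G
    using assms(1,2,4) by (simp add: reduced_basis_def term_ordering_def reduced_basis_axioms_def)
  obtain B where B: "minimal_strong_GB n le prim_ideal B"
    using minimal_strong_GB_exists[OF is_ideal_prim_ideal] by blast
  have "rad (den_set G) = rad (nat (Lcm (LC le ` B)))"
  proof (rule rad_eqI)
    show "nat (Lcm (LC le ` B)) \<noteq> 0"
      using Lcm_LC_neq_zero[OF B] Lcm_int_greater_eq_0[of "LC le ` B"] by linarith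
    show "p dvd den_set G \<longleftrightarrow> p dvd nat (Lcm (LC le ` B))" if "prime p" for p
      using prime_dvd_den_set_iff[OF B that] Lcm_int_greater_eq_0 by (metis int_dvd_int_iff nat_0_le)
  qed (rule den_set_neq_zero)
  then show ?thesis
    using lcm_sigma_eq[OF B] by simp
qed

end
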